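(* Let $\mathbb A\in\mathcal K$ and let $S$ be a tolerance of $\mathbb A$ (a reflexive, symmetric, compatible binary relation). Suppose $d_0,d_1,\dots,d_k\in\mathbb A$ satisfy $(d_j,d_{j+1})\in S$ for all $j\in\{0,\dots,k-1\}$. If for some $i\in\{0,\dots,k\}$ there is $d'_i\in\mathbb A$ with $d_i\sqsubseteq d'_i$, then there are $d'_j\in\mathbb A$ for $j\in\{0,\dots,k\}\setminus\{i\}$ such that $d_j\sqsubseteq d'_j$ for all $j\in\{0,\dots,k\}$ and $(d'_j,d'_{j+1})\in S$ for all $j\in\{0,\dots,k-1\}$. Moreover, if $d_0,\dots,d_{i-1}$ are maximal elements of $\mathbb A$, then there are $d''_0,\dots,d''_k$ such that $d''_j=d_j$ for $j\in\{0,\dots,i-1\}$, $d_i\sqsubseteq d'_i\sqsubseteq d''_i$, $d_j\sqsubseteq d''_j$ for $j\in\{i+1,\dots,k\}$, and $(d''_j,d''_{j+1})\in S$ for all $j\in\{0,\dots,k-1\}$.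
   Context: All algebras are finite and idempotent. Edges: for elements $a,b$ of an algebra $\mathbb A$ let $\mathbb B=\mathrm{Sg}(a,b)$ (the generated subalgebra). The pair $ab$ is an edge if there is a maximal congruence $\theta$ of $\mathbb B$ such that either $\mathbb B/\theta$ is a set (unary type), or $\mathbb B/\theta$ is term equivalent to the full idempotent reduct of a module and some term operation $f$ induces on $\mathbb B/\theta$ the affine operation $x-y+z$ (affine type), or some term operation $f$ with $f/\theta$ a semilattice operation on $\{a/\theta,b/\theta\}$, or one with $f/\theta$ a majority operation on $\{a/\theta,b/\theta\}$. Semilattice type: the semilattice option holds for some $\theta$; majority type: not semilattice type and the majority option holds for some $\theta$; $\{a/\theta,b/\theta\}$ is a thick edge. $\mathbb A$ is smooth if for every edge $ab$ of semilattice or majority type with witness $\theta$, $a/\theta\cup b/\theta$ is a subalgebra. Standing assumption: $\mathcal K$ is a fixed finite class of similar smooth idempotent algebras, closed under subalgebras and homomorphic images, with no edges of unary type. Fixed binary term $\cdot$: semilattice operation on every thick semilattice edge of every algebra in $\mathcal K$, and for all $a,b$ either $a\cdot b=a$ or $(a,a\cdot b)$ is a thin semilattice edge. A thin semilattice edge is a pair $ab$ with $a\cdot b=b\cdot a=b$, written $a\le b$. An s-path is a sequence $a_0\le a_1\le\dots\le a_k$; $a\sqsubseteq b$ means there is an s-path from $a$ to $b$ in $\mathbb A$. $a$ is maximal if $a\sqsubseteq b$ implies $b\sqsubseteq a$. *)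

theory Defs
  imports Main
begin

text \<open>
  A finite idempotent algebra is given by a carrier A and a set F of basic operations,
  each paired with its arity.  Operations act on argument lists.
\<close>

type_synonym 'a operation = "nat \<times> ('a list \<Rightarrow> 'a)"

definition closed_under :: "'a set \<Rightarrow> 'a operation set \<Rightarrow> 'a set \<Rightarrow> bool" where
  "closed_under A F B \<longleftrightarrow> B \<subseteq> A \<and>
     (\<forall>(m, g) \<in> F. \<forall>xs. length xs = m \<and> set xs \<subseteq> B \<longrightarrow> g xs \<in> B)"

definition fin_idem_algebra :: "'a set \<Rightarrow> 'a operation set \<Rightarrow> bool" where
  "fin_idem_algebra A F \<longleftrightarrow> A \<noteq> {} \<and> finite A \<and> closed_under A F A \<and>
     (\<forall>(m, g) \<in> F. \<forall>x \<in> A. g (replicate m x) = x)"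

inductive term_op :: "'a operation set \<Rightarrow> nat \<Rightarrow> ('a list \<Rightarrow> 'a) \<Rightarrow> bool" for F where
  proj: "i < n \<Longrightarrow> term_op F n (\<lambda>xs. xs ! i)"
| comp: "(m, g) \<in> F \<Longrightarrow> length fs = m \<Longrightarrow> (\<forall>f \<in> set fs. term_op F n f)
         \<Longrightarrow> term_op F n (\<lambda>xs. g (map (\<lambda>f. f xs) fs))"

definition Sg :: "'a set \<Rightarrow> 'a operation set \<Rightarrow> 'a set \<Rightarrow> 'a set" where
  "Sg A F X = \<Inter> {B. X \<subseteq> B \<and> closed_under A F B}"

definition congruence :: "'a operation set \<Rightarrow> 'a set \<Rightarrow> ('a \<times> 'a) set \<Rightarrow> bool" where
  "congruence F B \<theta> \<longleftrightarrow> equiv B \<theta> \<and>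
     (\<forall>(m, g) \<in> F. \<forall>xs ys. length xs = m \<and> length ys = m \<and>
        list_all2 (\<lambda>x y. (x, y) \<in> \<theta>) xs ys \<longrightarrow> (g xs, g ys) \<in> \<theta>)"

definition max_congruence :: "'a operation set \<Rightarrow> 'a set \<Rightarrow> ('a \<times> 'a) set \<Rightarrow> bool" where
  "max_congruence F B \<theta> \<longleftrightarrow> congruence F B \<theta> \<and> \<theta> \<noteq> B \<times> B \<and>
     (\<forall>\<psi>. congruence F B \<psi> \<and> \<theta> \<subseteq> \<psi> \<longrightarrow> \<psi> = \<theta> \<or> \<psi> = B \<times> B)"

definition quot_is_set :: "'a operation set \<Rightarrow> 'a set \<Rightarrow> ('a \<times> 'a) set \<Rightarrow> bool" where
  "quot_is_set F B \<theta> \<longleftrightarrow> (\<forall>n f. 0 < n \<and> term_op F n f \<longrightarrow>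
     (\<exists>i < n. \<forall>xs. length xs = n \<and> set xs \<subseteq> B \<longrightarrow> (f xs, xs ! i) \<in> \<theta>))"

definition semilattice_on :: "('a \<times> 'a) set \<Rightarrow> ('a list \<Rightarrow> 'a) \<Rightarrow> 'a \<Rightarrow> 'a \<Rightarrow> bool" where
  "semilattice_on \<theta> f a b \<longleftrightarrow> (\<forall>x \<in> {a, b}. \<forall>y \<in> {a, b}. \<forall>z \<in> {a, b}.
      ((f [x, y], a) \<in> \<theta> \<or> (f [x, y], b) \<in> \<theta>) \<and>
      (f [x, x], x) \<in> \<theta> \<and>
      (f [x, y], f [y, x]) \<in> \<theta> \<and>
      (f [f [x, y], z], f [x, f [y, z]]) \<in> \<theta>)"

definition majority_on :: "('a \<times> 'a) set \<Rightarrow> ('a list \<Rightarrow> 'a) \<Rightarrow> 'a \<Rightarrow> 'a \<Rightarrow> bool" where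
  "majority_on \<theta> f a b \<longleftrightarrow> (\<forall>x \<in> {a, b}. \<forall>y \<in> {a, b}.
      (f [x, x, y], x) \<in> \<theta> \<and> (f [x, y, x], x) \<in> \<theta> \<and> (f [y, x, x], x) \<in> \<theta>)"

definition unary_witness :: "'a set \<Rightarrow> 'a operation set \<Rightarrow> 'a \<Rightarrow> 'a \<Rightarrow> ('a \<times> 'a) set \<Rightarrow> bool" where
  "unary_witness A F a b \<theta> \<longleftrightarrow> max_congruence F (Sg A F {a, b}) \<theta> \<and> quot_is_set F (Sg A F {a, b}) \<theta>"

definition semilattice_witness :: "'a set \<Rightarrow> 'a operation set \<Rightarrow> 'a \<Rightarrow> 'a \<Rightarrow> ('a \<times> 'a) set \<Rightarrow> bool" where
  "semilattice_witness A F a b \<theta> \<longleftrightarrow> max_congruence F (Sg A F {a, b}) \<theta> \<and>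
     (\<exists>f. term_op F 2 f \<and> semilattice_on \<theta> f a b)"

definition majority_witness :: "'a set \<Rightarrow> 'a operation set \<Rightarrow> 'a \<Rightarrow> 'a \<Rightarrow> ('a \<times> 'a) set \<Rightarrow> bool" where
  "majority_witness A F a b \<theta> \<longleftrightarrow> max_congruence F (Sg A F {a, b}) \<theta> \<and>
     (\<exists>f. term_op F 3 f \<and> majority_on \<theta> f a b)"

definition semilattice_type :: "'a set \<Rightarrow> 'a operation set \<Rightarrow> 'a \<Rightarrow> 'a \<Rightarrow> bool" where
  "semilattice_type A F a b \<longleftrightarrow> (\<exists>\<theta>. semilattice_witness A F a b \<theta>)"

definition majority_type :: "'a set \<Rightarrow> 'a operation set \<Rightarrow> 'a \<Rightarrow> 'a \<Rightarrow> bool" where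
  "majority_type A F a b \<longleftrightarrow> \<not> semilattice_type A F a b \<and> (\<exists>\<theta>. majority_witness A F a b \<theta>)"

definition smooth :: "'a set \<Rightarrow> 'a operation set \<Rightarrow> bool" where
  "smooth A F \<longleftrightarrow> (\<forall>a \<in> A. \<forall>b \<in> A. \<forall>\<theta>.
     (semilattice_witness A F a b \<theta> \<or> (majority_type A F a b \<and> majority_witness A F a b \<theta>))
       \<longrightarrow> closed_under A F (\<theta> `` {a} \<union> \<theta> `` {b}))"

definition no_unary_edges :: "'a set \<Rightarrow> 'a operation set \<Rightarrow> bool" where
  "no_unary_edges A F \<longleftrightarrow> \<not> (\<exists>a \<in> A. \<exists>b \<in> A. \<exists>\<theta>. unary_witness A F a b \<theta>)"

text \<open>Thin semilattice edge a \<le> b w.r.t. the fixed binary term operation mult (x\<cdot>y = mult [x,y]).\<close>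
definition thin_le :: "'a set \<Rightarrow> ('a list \<Rightarrow> 'a) \<Rightarrow> 'a \<Rightarrow> 'a \<Rightarrow> bool" where
  "thin_le A mult a b \<longleftrightarrow> a \<in> A \<and> b \<in> A \<and> mult [a, b] = b \<and> mult [b, a] = b"

definition s_le :: "'a set \<Rightarrow> ('a list \<Rightarrow> 'a) \<Rightarrow> 'a \<Rightarrow> 'a \<Rightarrow> bool" where
  "s_le A mult a b \<longleftrightarrow> a \<in> A \<and> (thin_le A mult)\<^sup>*\<^sup>* a b"

definition s_maximal :: "'a set \<Rightarrow> ('a list \<Rightarrow> 'a) \<Rightarrow> 'a \<Rightarrow> bool" where
  "s_maximal A mult a \<longleftrightarrow> a \<in> A \<and> (\<forall>b. s_le A mult a b \<longrightarrow> s_le A mult b a)"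

text \<open>The standing assumptions, as they apply to the algebra A in the class K, with
  mult the term operation of A induced by the fixed binary term.\<close>
definition K_algebra :: "'a set \<Rightarrow> 'a operation set \<Rightarrow> ('a list \<Rightarrow> 'a) \<Rightarrow> bool" where
  "K_algebra A F mult \<longleftrightarrow> fin_idem_algebra A F \<and> smooth A F \<and> no_unary_edges A F \<and>
     term_op F 2 mult \<and>
     (\<forall>a \<in> A. \<forall>b \<in> A. \<forall>\<theta>. semilattice_witness A F a b \<theta> \<longrightarrow> semilattice_on \<theta> mult a b) \<and>
     (\<forall>a \<in> A. \<forall>b \<in> A. mult [a, b] = a \<or> thin_le A mult a (mult [a, b]))"

definition tolerance :: "'a set \<Rightarrow> 'a operation set \<Rightarrow> ('a \<times> 'a) set \<Rightarrow> bool" where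
  "tolerance A F S \<longleftrightarrow> S \<subseteq> A \<times> A \<and> refl_on A S \<and> sym S \<and>
     (\<forall>(m, g) \<in> F. \<forall>xs ys. length xs = m \<and> length ys = m \<and>
        list_all2 (\<lambda>x y. (x, y) \<in> S) xs ys \<longrightarrow> (g xs, g ys) \<in> S)"

end

theory Submission
  imports Defs
begin

text \<open>
  A thin edge \<open>d i \<le> b\<close> spreads along a tolerance chain: with \<open>f i = b\<close> and
  \<open>f (j + 1) = d (j + 1) \<cdot> f j\<close> (and symmetrically to the left) one keeps \<open>d j \<cdot> f j = f j\<close>,
  so compatibility of S with \<open>\<cdot>\<close> links \<open>f j\<close> to \<open>f (j + 1)\<close>, and \<open>d j \<sqsubseteq> f j\<close> because
  \<open>a \<cdot> x\<close> is either a or a thin successor of a.  Iterating along an s-path gives the first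
  claim.  For the second, lift the suffix of the chain starting at \<open>i - 1\<close> so that its entry
  at i lies above \<open>d' i\<close>; the new entry at \<open>i - 1\<close> lies above the maximal \<open>d (i - 1)\<close>, hence
  also below it, and lifting it back to \<open>d (i - 1)\<close> along the same suffix leaves the prefix
  untouched.
\<close>

lemma term_op_closed:
  assumes "term_op F n f" "closed_under A F A" "length xs = n" "set xs \<subseteq> A"
  shows "f xs \<in> A"
  using assms(1,3)
proof (induction rule: term_op.induct)
  case (proj i n)
  then show ?case using assms(4) by (metis nth_mem subsetD)
next
  case (comp m g fs n)
  then have "set (map (\<lambda>f. f xs) fs) \<subseteq> A" by auto
  with comp.hyps(1,2) assms(2) show ?case unfolding closed_under_def by fastforce
qed

lemma term_op_idem:
  assumes "term_op F n f" "fin_idem_algebra A F" "x \<in> A"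
  shows "f (replicate n x) = x"
  using assms(1)
proof (induction rule: term_op.induct)
  case (proj i n)
  then show ?case by simp
next
  case (comp m g fs n)
  then have "map (\<lambda>f. f (replicate n x)) fs = replicate m x"
    by (simp add: list_eq_iff_nth_eq)
  with comp.hyps(1) assms(2,3) show ?case unfolding fin_idem_algebra_def by fastforce
qed

lemma term_op_tolerance:
  assumes "term_op F n f" "tolerance A F S" "length xs = n" "length ys = n"
    "list_all2 (\<lambda>x y. (x, y) \<in> S) xs ys"
  shows "(f xs, f ys) \<in> S"
  using assms(1,3,4)
proof (induction rule: term_op.induct)
  case (proj i n)
  then show ?case using assms(5) by (simp add: list_all2_conv_all_nth)
next
  case (comp m g fs n)
  then have "list_all2 (\<lambda>x y. (x, y) \<in> S) (map (\<lambda>f. f xs) fs) (map (\<lambda>f. f ys) fs)"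
    by (auto simp: list_all2_conv_all_nth)
  with comp.hyps(1,2) assms(2) show ?case unfolding tolerance_def by fastforce
qed

definition tolerance_chain :: "('a \<times> 'a) set \<Rightarrow> nat \<Rightarrow> (nat \<Rightarrow> 'a) \<Rightarrow> bool" where
  "tolerance_chain S k d \<longleftrightarrow> (\<forall>j < k. (d j, d (Suc j)) \<in> S)"

locale thin_edge_tolerance =
  fixes A :: "'a set" and mult :: "'a list \<Rightarrow> 'a" and S :: "('a \<times> 'a) set"
  assumes mult_closed: "a \<in> A \<Longrightarrow> b \<in> A \<Longrightarrow> mult [a, b] \<in> A"
    and mult_idem: "a \<in> A \<Longrightarrow> mult [a, a] = a"
    and mult_dichotomy: "a \<in> A \<Longrightarrow> b \<in> A \<Longrightarrow> mult [a, b] = a \<or> thin_le A mult a (mult [a, b])"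
    and tolerance_refl: "a \<in> A \<Longrightarrow> (a, a) \<in> S"
    and tolerance_sym: "(a, b) \<in> S \<Longrightarrow> (b, a) \<in> S"
    and mult_tolerance: "(a, a') \<in> S \<Longrightarrow> (b, b') \<in> S \<Longrightarrow> (mult [a, b], mult [a', b']) \<in> S"

lemma K_algebra_thin_edge_tolerance:
  assumes K: "K_algebra A F mult" and T: "tolerance A F S"
  shows "thin_edge_tolerance A mult S"
proof
  have mult: "term_op F 2 mult" and alg: "fin_idem_algebra A F"
    using K unfolding K_algebra_def by auto
  fix a a' b b'
  show "a \<in> A \<Longrightarrow> b \<in> A \<Longrightarrow> mult [a, b] \<in> A"
    using term_op_closed[OF mult, of A "[a, b]"] alg unfolding fin_idem_algebra_def by simp
  show "a \<in> A \<Longrightarrow> mult [a, a] = a"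
    using term_op_idem[OF mult alg] by (simp add: numeral_2_eq_2)
  show "a \<in> A \<Longrightarrow> b \<in> A \<Longrightarrow> mult [a, b] = a \<or> thin_le A mult a (mult [a, b])"
    using K unfolding K_algebra_def by blast
  show "a \<in> A \<Longrightarrow> (a, a) \<in> S" "(a, b) \<in> S \<Longrightarrow> (b, a) \<in> S"
    using T unfolding tolerance_def refl_on_def sym_def by auto
  show "(a, a') \<in> S \<Longrightarrow> (b, b') \<in> S \<Longrightarrow> (mult [a, b], mult [a', b']) \<in> S"
    using term_op_tolerance[OF mult T, of "[a, b]" "[a', b']"] by simp
qed

context thin_edge_tolerance
begin

abbreviation s_below :: "'a \<Rightarrow> 'a \<Rightarrow> bool" (infix "\<sqsubseteq>" 50) where
  "a \<sqsubseteq> b \<equiv> s_le A mult a b"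

lemma s_le_refl: "a \<in> A \<Longrightarrow> a \<sqsubseteq> a"
  unfolding s_le_def by simp

lemma s_le_trans: "a \<sqsubseteq> b \<Longrightarrow> b \<sqsubseteq> c \<Longrightarrow> a \<sqsubseteq> c"
  unfolding s_le_def by auto

lemma thin_le_imp_s_le: "thin_le A mult a b \<Longrightarrow> a \<sqsubseteq> b"
  unfolding s_le_def thin_le_def by auto

lemma s_le_in_carrier:
  assumes "a \<sqsubseteq> b"
  shows "b \<in> A"
proof -
  have "(thin_le A mult)\<^sup>*\<^sup>* a b" "a \<in> A" using assms unfolding s_le_def by auto
  then show ?thesis by (induction rule: rtranclp_induct) (auto simp: thin_le_def)
qed

lemma s_le_mult: "a \<in> A \<Longrightarrow> b \<in> A \<Longrightarrow> a \<sqsubseteq> mult [a, b]"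
  using mult_dichotomy s_le_refl thin_le_imp_s_le by metis

lemma mult_absorb: "a \<in> A \<Longrightarrow> b \<in> A \<Longrightarrow> mult [a, mult [a, b]] = mult [a, b]"
  using mult_dichotomy[of a b] mult_idem[of a] unfolding thin_le_def by auto

primrec propagate :: "(nat \<Rightarrow> 'a) \<Rightarrow> 'a \<Rightarrow> nat \<Rightarrow> 'a" where
  "propagate e b 0 = b"
| "propagate e b (Suc j) = mult [e (Suc j), propagate e b j]"

lemma propagate_absorbed:
  assumes "\<forall>j \<le> n. e j \<in> A" "thin_le A mult (e 0) b" "j \<le> n"
  shows "propagate e b j \<in> A \<and> mult [e j, propagate e b j] = propagate e b j"
  using assms(3)
proof (induction j)
  case 0
  then show ?case using assms(2) unfolding thin_le_def by simp
next
  case (Suc j)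
  then show ?case using assms(1) mult_closed mult_absorb by simp
qed

lemma propagate_lifts_chain:
  assumes e: "\<forall>j \<le> n. e j \<in> A" "tolerance_chain S n e" and b: "thin_le A mult (e 0) b"
  shows "\<forall>j \<le> n. e j \<sqsubseteq> propagate e b j" and "tolerance_chain S n (propagate e b)"
proof -
  note absorbed = propagate_absorbed[OF e(1) b]
  show "\<forall>j \<le> n. e j \<sqsubseteq> propagate e b j"
  proof (intro allI impI)
    fix j assume "j \<le> n"
    then show "e j \<sqsubseteq> propagate e b j"
      using b absorbed[of "j - 1"] e(1) s_le_mult thin_le_imp_s_le by (cases j) auto
  qed
  show "tolerance_chain S n (propagate e b)"
    unfolding tolerance_chain_def
  proof (intro allI impI)
    fix j assume j: "j < n"
    have "(e j, e (Suc j)) \<in> S" using e(2) j unfolding tolerance_chain_def by simp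
    moreover have "(propagate e b j, propagate e b j) \<in> S" using absorbed[of j] j tolerance_refl by simp
    ultimately have "(mult [e j, propagate e b j], mult [e (Suc j), propagate e b j]) \<in> S"
      by (rule mult_tolerance)
    then show "(propagate e b j, propagate e b (Suc j)) \<in> S" using absorbed[of j] j by simp
  qed
qed

lemma thin_le_lifts_chain:
  assumes d: "\<forall>j \<le> k. d j \<in> A" "tolerance_chain S k d" and i: "i \<le> k"
    and b: "thin_le A mult (d i) b"
  shows "\<exists>d'. d' i = b \<and> (\<forall>j \<le> k. d j \<sqsubseteq> d' j) \<and> tolerance_chain S k d'"
proof -
  define r where "r = propagate (\<lambda>n. d (i + n)) b"
  define l where "l = propagate (\<lambda>n. d (i - n)) b"
  have "\<forall>n \<le> k - i. d (i + n) \<in> A" "tolerance_chain S (k - i) (\<lambda>n. d (i + n))"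
    using d i unfolding tolerance_chain_def by simp_all
  from propagate_lifts_chain[OF this] b
  have r: "\<forall>n \<le> k - i. d (i + n) \<sqsubseteq> r n" "tolerance_chain S (k - i) r"
    unfolding r_def by simp_all
  have "\<forall>n \<le> i. d (i - n) \<in> A" using d(1) i by simp
  moreover have "tolerance_chain S i (\<lambda>n. d (i - n))"
    unfolding tolerance_chain_def
  proof (intro allI impI)
    fix n assume "n < i"
    then have "i - n = Suc (i - Suc n)" "i - Suc n < k" using i by simp_all
    then have "(d (i - Suc n), d (i - n)) \<in> S" using d(2) unfolding tolerance_chain_def by simp
    then show "(d (i - n), d (i - Suc n)) \<in> S" by (rule tolerance_sym)
  qed
  ultimately have l: "\<forall>n \<le> i. d (i - n) \<sqsubseteq> l n" "tolerance_chain S i l"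
    using propagate_lifts_chain[of i "\<lambda>n. d (i - n)" b] b unfolding l_def by simp_all
  define d' where "d' j = (if j < i then l (i - j) else r (j - i))" for j
  have "d' i = b" unfolding d'_def r_def by simp
  moreover have "d j \<sqsubseteq> d' j" if "j \<le> k" for j
    using that l(1)[rule_format, of "i - j"] r(1)[rule_format, of "j - i"] unfolding d'_def by auto
  moreover have "(d' j, d' (Suc j)) \<in> S" if j: "j < k" for j
  proof -
    consider "Suc j < i" | "Suc j = i" | "i \<le> j" by linarith
    then show ?thesis
    proof cases
      case 1
      then have "(l (i - Suc j), l (Suc (i - Suc j))) \<in> S"
        using l(2) unfolding tolerance_chain_def by simp
      with 1 show ?thesis unfolding d'_def by (simp add: Suc_diff_Suc) (rule tolerance_sym)
    next
      case 2
      then have "(l 0, l 1) \<in> S" using l(2) unfolding tolerance_chain_def by simp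
      then have "(l 1, l 0) \<in> S" by (rule tolerance_sym)
      moreover from 2 have "i - j = 1" by simp
      ultimately show ?thesis using 2 unfolding d'_def l_def r_def by simp
    next
      case 3
      then show ?thesis using r(2) j unfolding tolerance_chain_def d'_def by (simp add: Suc_diff_le)
    qed
  qed
  ultimately show ?thesis unfolding tolerance_chain_def by blast
qed

lemma s_le_lifts_chain:
  assumes d: "\<forall>j \<le> k. d j \<in> A" "tolerance_chain S k d" and i: "i \<le> k"
    and c: "d i \<sqsubseteq> c"
  shows "\<exists>d'. d' i = c \<and> (\<forall>j \<le> k. d j \<sqsubseteq> d' j) \<and> tolerance_chain S k d'"
proof -
  have "(thin_le A mult)\<^sup>*\<^sup>* (d i) c" using c unfolding s_le_def by simp
  then show ?thesis
  proof (induction rule: rtranclp_induct)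
    case base
    show ?case using d s_le_refl by blast
  next
    case (step b c)
    then obtain d' where d': "d' i = b" "\<forall>j \<le> k. d j \<sqsubseteq> d' j" "tolerance_chain S k d'"
      by blast
    then have "\<forall>j \<le> k. d' j \<in> A" using s_le_in_carrier by blast
    then obtain d'' where "d'' i = c" "\<forall>j \<le> k. d' j \<sqsubseteq> d'' j" "tolerance_chain S k d''"
      using thin_le_lifts_chain[of k d' i c] d' i step.hyps(2) by blast
    with d'(2) show ?case using s_le_trans by blast
  qed
qed

lemma s_le_lifts_chain_fixing_maximal_start:
  assumes e: "\<forall>j \<le> n. e j \<in> A" "tolerance_chain S n e" "1 \<le> n"
    and e0: "s_maximal A mult (e 0)" and c: "e 1 \<sqsubseteq> c"
  shows "\<exists>g. g 0 = e 0 \<and> c \<sqsubseteq> g 1 \<and> (\<forall>j \<le> n. e j \<sqsubseteq> g j) \<and> tolerance_chain S n g"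
proof -
  obtain f where f: "f 1 = c" "\<forall>j \<le> n. e j \<sqsubseteq> f j" "tolerance_chain S n f"
    using s_le_lifts_chain[OF e c] by blast
  have "f 0 \<sqsubseteq> e 0" using e0 f(2) unfolding s_maximal_def by blast
  moreover have "\<forall>j \<le> n. f j \<in> A" using f(2) s_le_in_carrier by blast
  ultimately obtain g where "g 0 = e 0" "\<forall>j \<le> n. f j \<sqsubseteq> g j" "tolerance_chain S n g"
    using s_le_lifts_chain[of n f 0] f(3) by blast
  with f e(3) show ?thesis using s_le_trans by metis
qed

lemma s_le_lifts_chain_fixing_maximal_prefix:
  assumes d: "\<forall>j \<le> k. d j \<in> A" "tolerance_chain S k d" and i: "i \<le> k"
    and c: "d i \<sqsubseteq> c" and max: "0 < i \<Longrightarrow> s_maximal A mult (d (i - 1))"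
  shows "\<exists>d''. (\<forall>j < i. d'' j = d j) \<and> c \<sqsubseteq> d'' i \<and> (\<forall>j \<le> k. d j \<sqsubseteq> d'' j) \<and>
    tolerance_chain S k d''"
proof (cases i)
  case 0
  moreover have "c \<sqsubseteq> c" using c s_le_in_carrier s_le_refl by blast
  ultimately show ?thesis using s_le_lifts_chain[OF d i c] by auto
next
  case (Suc m)
  define e where "e n = d (m + n)" for n
  have "\<forall>n \<le> k - m. e n \<in> A" "tolerance_chain S (k - m) e" "1 \<le> k - m"
    using d i Suc unfolding e_def tolerance_chain_def by simp_all
  moreover have "s_maximal A mult (e 0)" "e 1 \<sqsubseteq> c"
    using max c Suc unfolding e_def by simp_all
  ultimately obtain g where g: "g 0 = e 0" "c \<sqsubseteq> g 1" "\<forall>j \<le> k - m. e j \<sqsubseteq> g j"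
    "tolerance_chain S (k - m) g"
    using s_le_lifts_chain_fixing_maximal_start by blast
  define d'' where "d'' j = (if j < m then d j else g (j - m))" for j
  have "\<forall>j < i. d'' j = d j" using g(1) Suc unfolding d''_def e_def by (auto simp: less_Suc_eq)
  moreover have "c \<sqsubseteq> d'' i" using g(2) Suc unfolding d''_def by simp
  moreover have "d j \<sqsubseteq> d'' j" if "j \<le> k" for j
    using that d(1) s_le_refl g(3)[rule_format, of "j - m"] unfolding d''_def e_def by auto
  moreover have "(d'' j, d'' (Suc j)) \<in> S" if j: "j < k" for j
  proof -
    consider "Suc j < m" | "Suc j = m" | "m \<le> j" by linarith
    then show ?thesis
    proof cases
      case 1
      then show ?thesis using d(2) j unfolding tolerance_chain_def d''_def by simp
    next
      case 2
      then show ?thesis using d(2) j g(1) unfolding tolerance_chain_def d''_def e_def by auto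
    next
      case 3
      then show ?thesis using g(4) j unfolding tolerance_chain_def d''_def by (simp add: Suc_diff_le)
    qed
  qed
  ultimately show ?thesis unfolding tolerance_chain_def by blast
qed

end

theorem lemma21:
  fixes A :: "'a set" and F :: "'a operation set" and mult :: "'a list \<Rightarrow> 'a"
    and S :: "('a \<times> 'a) set" and d :: "nat \<Rightarrow> 'a" and k i :: nat and di' :: 'a
  assumes "K_algebra A F mult"
    and "tolerance A F S"
    and "\<forall>j \<le> k. d j \<in> A"
    and "\<forall>j < k. (d j, d (Suc j)) \<in> S"
    and "i \<le> k"
    and "di' \<in> A"
    and "s_le A mult (d i) di'"
  shows "(\<exists>d'. d' i = di' \<and> (\<forall>j \<le> k. d' j \<in> A \<and> s_le A mult (d j) (d' j)) \<and>
              (\<forall>j < k. (d' j, d' (Suc j)) \<in> S)) \<and>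
         ((\<forall>j < i. s_maximal A mult (d j)) \<longrightarrow>
            (\<exists>d''. (\<forall>j < i. d'' j = d j) \<and> s_le A mult di' (d'' i) \<and>
                   (\<forall>j. i < j \<and> j \<le> k \<longrightarrow> s_le A mult (d j) (d'' j)) \<and>
                   (\<forall>j \<le> k. d'' j \<in> A) \<and>
                   (\<forall>j < k. (d'' j, d'' (Suc j)) \<in> S)))"
proof -
  interpret thin_edge_tolerance A mult S
    using assms(1,2) by (rule K_algebra_thin_edge_tolerance)
  have chain: "tolerance_chain S k d"
    using assms(4) unfolding tolerance_chain_def .
  have "\<exists>d'. d' i = di' \<and> (\<forall>j \<le> k. d' j \<in> A \<and> d j \<sqsubseteq> d' j) \<and> tolerance_chain S k d'"
  proof -
    obtain d' where "d' i = di'" "\<forall>j \<le> k. d j \<sqsubseteq> d' j" "tolerance_chain S k d'"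
      using s_le_lifts_chain[OF assms(3) chain assms(5,7)] by blast
    then show ?thesis using s_le_in_carrier by blast
  qed
  moreover have "\<exists>d''. (\<forall>j < i. d'' j = d j) \<and> di' \<sqsubseteq> d'' i \<and>
      (\<forall>j. i < j \<and> j \<le> k \<longrightarrow> d j \<sqsubseteq> d'' j) \<and> (\<forall>j \<le> k. d'' j \<in> A) \<and> tolerance_chain S k d''"
    if "\<forall>j < i. s_maximal A mult (d j)"
  proof -
    have "0 < i \<Longrightarrow> s_maximal A mult (d (i - 1))" using that by simp
    then obtain d'' where "\<forall>j < i. d'' j = d j" "di' \<sqsubseteq> d'' i" "\<forall>j \<le> k. d j \<sqsubseteq> d'' j"
        "tolerance_chain S k d''"
      using s_le_lifts_chain_fixing_maximal_prefix[OF assms(3) chain assms(5,7)] by blast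
    then show ?thesis using s_le_in_carrier by (intro exI[of _ d'']) auto
  qed
  ultimately show ?thesis unfolding tolerance_chain_def by blast
qed

end
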